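(* The vector $\mathbf{w}:=\mathbf{M}(\mathbf{t}-\mathbf{t}_{\uparrow})/\|\mathbf{M}(\mathbf{t}-\mathbf{t}_{\uparrow})\|_1$ computed in Algorithm 1 is a weight vector, i.e., $\mathbf{w}\geq 0$ and $\|\mathbf{w}\|_1=1$.
   Context: $\mathbf{M}$ is a symmetric positive-definite matrix defining the norm $\|\mathbf{v}\|^2=\mathbf{v}^T\mathbf{M}\mathbf{v}$; $\|\cdot\|_1$ is the 1-norm. In Algorithm 1 (point-oriented Pareto computation), $\mathbf{t}\in\mathbb{R}^{m}$ is the given threshold vector, $\Phi$ is a nonempty finite set of points, $\mathrm{down}(\Phi)$ is the downward closure of the convex hull of $\Phi$, and $\mathbf{t}_{\uparrow}$ is the point $\mathbf{x}\in\mathrm{down}(\Phi)$ minimising $\|\mathbf{t}-\mathbf{x}\|$; $\mathbf{w}$ is computed in an iteration of the while loop (which runs only while $\|\mathbf{t}_{\downarrow}-\mathbf{t}_{\uparrow}\|>\varepsilon$), so that $\mathbf{t}\neq\mathbf{t}_{\uparrow}$, i.e. $\mathbf{t}\notin\mathrm{down}(\Phi)$. *)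

theory Defs
  imports "HOL-Analysis.Analysis"
begin

definition sym_pos_def_mat :: "real^'m^'m \<Rightarrow> bool" where
  "sym_pos_def_mat M \<longleftrightarrow> transpose M = M \<and> (\<forall>v. v \<noteq> 0 \<longrightarrow> v \<bullet> (M *v v) > 0)"

definition Mnorm :: "real^'m^'m \<Rightarrow> real^'m \<Rightarrow> real" where
  "Mnorm M v = sqrt (v \<bullet> (M *v v))"

definition norm1 :: "real^'m \<Rightarrow> real" where
  "norm1 v = (\<Sum>i\<in>UNIV. \<bar>v $ i\<bar>)"

definition down :: "(real^'m) set \<Rightarrow> (real^'m) set" where
  "down \<Phi> = {x. \<exists>y\<in>convex hull \<Phi>. \<forall>i. x $ i \<le> y $ i}"

end

theory Submission
  imports Defs
begin

text \<open>
  Moving \<open>t\<^sub>\<up>\<close> down along a coordinate axis stays inside the downward closed set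
  \<open>down \<Phi>\<close>, so by minimality the quadratic \<open>s \<mapsto> \<parallel>t - t\<^sub>\<up> + s e\<^sub>i\<parallel>\<^sup>2\<close> has its minimum
  over \<open>s \<ge> 0\<close> at \<open>s = 0\<close>. Its derivative there, \<open>2 (M (t - t\<^sub>\<up>))\<^sub>i\<close>, is therefore
  nonnegative. Since \<open>t \<noteq> t\<^sub>\<up>\<close> and \<open>M\<close> is positive definite, \<open>M (t - t\<^sub>\<up>) \<noteq> 0\<close>, so
  dividing by its 1-norm gives a weight vector.
\<close>

lemma down_downward_closed:
  assumes "x \<in> down \<Phi>" and "\<forall>j. y $ j \<le> x $ j"
  shows "y \<in> down \<Phi>"
  using assms order_trans unfolding down_def by blast

lemma quadratic_form_add_scaleR:
  fixes M :: "real^'m^'m" and d e :: "real^'m"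
  assumes "transpose M = M"
  shows "(d + s *\<^sub>R e) \<bullet> (M *v (d + s *\<^sub>R e))
       = d \<bullet> (M *v d) + 2 * s * ((M *v d) \<bullet> e) + s\<^sup>2 * (e \<bullet> (M *v e))"
proof -
  have "d \<bullet> (M *v e) = (M *v d) \<bullet> e"
    by (metis assms dot_lmul_matrix vector_transpose_matrix)
  then show ?thesis
    by (simp add: matrix_vector_right_distrib matrix_vector_mult_scaleR inner_add_left
        inner_add_right inner_commute algebra_simps power2_eq_square)
qed

lemma linear_coeff_nonneg_if_quadratic_nonneg:
  fixes a c :: real
  assumes "\<And>s. s > 0 \<Longrightarrow> 0 \<le> 2 * s * a + s\<^sup>2 * c"
  shows "0 \<le> a"
proof (rule ccontr)
  assume "\<not> 0 \<le> a"
  define s where "s = - a / (\<bar>c\<bar> + 1)"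
  have "s > 0"
    using \<open>\<not> 0 \<le> a\<close> by (simp add: s_def divide_neg_pos add_pos_nonneg)
  have "s * (\<bar>c\<bar> + 1) = - a"
    by (simp add: s_def)
  then have s_eq: "s * \<bar>c\<bar> + s = - a"
    by (simp add: algebra_simps)
  have "s * c \<le> s * \<bar>c\<bar>"
    using \<open>s > 0\<close> by (simp add: mult_left_mono)
  then have "2 * a + s * c < 0"
    using s_eq \<open>s > 0\<close> \<open>\<not> 0 \<le> a\<close> by linarith
  then have "s * (2 * a + s * c) < 0"
    using \<open>s > 0\<close> by (simp add: mult_pos_neg)
  with assms[OF \<open>s > 0\<close>] show False
    by (simp add: algebra_simps power2_eq_square)
qed

lemma Mnorm_le_iff:
  assumes "0 \<le> u \<bullet> (M *v u)"
  shows "Mnorm M u \<le> Mnorm M v \<longleftrightarrow> u \<bullet> (M *v u) \<le> v \<bullet> (M *v v)"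
  using assms unfolding Mnorm_def by (auto intro: real_sqrt_le_mono)

lemma nearest_point_gradient_nonneg:
  fixes M :: "real^'m^'m" and S :: "(real^'m) set"
  assumes "sym_pos_def_mat M"
    and "\<forall>x\<in>S. Mnorm M (t - p) \<le> Mnorm M (t - x)"
    and "\<And>s. s > 0 \<Longrightarrow> p - s *\<^sub>R axis i 1 \<in> S"
  shows "0 \<le> (M *v (t - p)) $ i"
proof (rule linear_coeff_nonneg_if_quadratic_nonneg)
  fix s :: real
  assume "s > 0"
  define d where "d = t - p"
  define e where "e = (axis i 1 :: real^'m)"
  have sym: "transpose M = M" and pd: "\<And>v. v \<noteq> 0 \<Longrightarrow> 0 < v \<bullet> (M *v v)"
    using assms(1) by (auto simp: sym_pos_def_mat_def)
  have "0 \<le> d \<bullet> (M *v d)"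
    using pd[of d] by (cases "d = 0") auto
  moreover have "Mnorm M d \<le> Mnorm M (d + s *\<^sub>R e)"
    using assms(2) assms(3)[OF \<open>s > 0\<close>] by (force simp: d_def e_def algebra_simps)
  ultimately have "d \<bullet> (M *v d) \<le> (d + s *\<^sub>R e) \<bullet> (M *v (d + s *\<^sub>R e))"
    by (simp add: Mnorm_le_iff)
  then show "0 \<le> 2 * s * (M *v d) $ i + s\<^sup>2 * (e \<bullet> (M *v e))"
    by (simp add: quadratic_form_add_scaleR[OF sym] e_def inner_axis)
qed

lemma norm1_scaleR: "norm1 (c *\<^sub>R v) = \<bar>c\<bar> * norm1 v"
  unfolding norm1_def by (simp add: abs_mult sum_distrib_left)

lemma norm1_pos: "v \<noteq> 0 \<Longrightarrow> 0 < norm1 v"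
  unfolding norm1_def
  by (metis abs_ge_zero finite zero_less_abs_iff sum_pos2 UNIV_I vec_eq_iff zero_index)

lemma norm1_normalize:
  assumes "\<forall>i. 0 \<le> v $ i" and "v \<noteq> 0"
  shows "(\<forall>i. 0 \<le> ((1 / norm1 v) *\<^sub>R v) $ i) \<and> norm1 ((1 / norm1 v) *\<^sub>R v) = 1"
  using assms norm1_pos[OF assms(2)] by (simp add: norm1_scaleR)

theorem lemma8:
  fixes M :: "real^'m^'m" and \<Phi> :: "(real^'m) set" and t tup :: "real^'m"
  assumes "sym_pos_def_mat M"
    and "finite \<Phi>" and "\<Phi> \<noteq> {}"
    and "tup \<in> down \<Phi>"
    and "\<forall>x\<in>down \<Phi>. Mnorm M (t - tup) \<le> Mnorm M (t - x)"
    and "t \<notin> down \<Phi>"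
  shows "let w = (1 / norm1 (M *v (t - tup))) *\<^sub>R (M *v (t - tup))
         in (\<forall>i. w $ i \<ge> 0) \<and> norm1 w = 1"
proof -
  have "0 \<le> (M *v (t - tup)) $ i" for i
  proof (rule nearest_point_gradient_nonneg[OF assms(1,5)])
    fix s :: real
    assume "s > 0"
    then show "tup - s *\<^sub>R axis i 1 \<in> down \<Phi>"
      using down_downward_closed[OF assms(4)] by (simp add: axis_def)
  qed
  moreover have "M *v (t - tup) \<noteq> 0"
  proof -
    have "t - tup \<noteq> 0"
      using assms(4,6) by auto
    then show ?thesis
      using assms(1) unfolding sym_pos_def_mat_def by (metis inner_zero_right less_irrefl)
  qed
  ultimately show ?thesis
    using norm1_normalize[of "M *v (t - tup)"] by (simp add: Let_def)
qed

end
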